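(* Fix $u_{\max}>0$, $u^*\in[0,u_{\max}]$, $u_a\in[0,u_{\max}]$, $C\ge0$, and consider the problem (P2): $\min_{z\in\mathcal C_b}\{z^2: q(z)\le -C\}$ where $q(z)=g(u_a,z)$. Then $q'(z)=\frac1{\hat u}(z-u^* )(z-\hat u)$. Let $m=\frac{2u^*+u_{\max}}4$ and $\gamma=\max\{u^*,\hat u\}$. (i) If $u^*\ne\hat u$: if $-C\ge q(m)$, the optimal solution of (P2) is $z=m$; if $q(\gamma)\le -C<q(m)$, the optimal solution is the smallest root of $q(z)=-C$ in $(m,u_{\max}]$; if $-C<q(\gamma)$, (P2) is infeasible. (ii) If $u^*=\hat u$: if $-C\ge q(m)$, the optimal solution is $z=m$; if $-C<q(m)$, (P2) is infeasible.
   Context: $f(u)=u(1-u/u_{\max})$ on $[0,u_{\max}]$, $\hat u=u_{\max}/2$ its unique maximizer, $F$ a primitive of $f$, $g(s,z)=(s-u^* )f(s)-(z-u^* )f(z)-F(s)+F(z)$, and $\mathcal C_b=[\frac{2u^*+u_{\max}}4,u_{\max}]$. *)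

theory Defs
  imports "HOL-Analysis.Analysis"
begin

definition flux :: "real \<Rightarrow> real \<Rightarrow> real" where
  "flux umax u = u * (1 - u / umax)"

definition gfun :: "real \<Rightarrow> (real \<Rightarrow> real) \<Rightarrow> real \<Rightarrow> real \<Rightarrow> real \<Rightarrow> real" where
  "gfun umax F ustar s z = (s - ustar) * flux umax s - (z - ustar) * flux umax z - F s + F z"

definition Cb :: "real \<Rightarrow> real \<Rightarrow> real set" where
  "Cb umax ustar = {(2 * ustar + umax) / 4 .. umax}"

definition P2_feasible :: "real \<Rightarrow> (real \<Rightarrow> real) \<Rightarrow> real \<Rightarrow> real \<Rightarrow> real \<Rightarrow> real set" where
  "P2_feasible umax F ustar ua C = {z \<in> Cb umax ustar. gfun umax F ustar ua z \<le> - C}"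

definition P2_optimal :: "real \<Rightarrow> (real \<Rightarrow> real) \<Rightarrow> real \<Rightarrow> real \<Rightarrow> real \<Rightarrow> real \<Rightarrow> bool" where
  "P2_optimal umax F ustar ua C z \<longleftrightarrow>
     z \<in> P2_feasible umax F ustar ua C \<and>
     (\<forall>y \<in> P2_feasible umax F ustar ua C. z\<^sup>2 \<le> y\<^sup>2)"

end

theory Submission
  imports Defs
begin

text \<open>Since F' = f, the terms f(z) cancel in q'(z), so q'(z) = -(z - u*) f'(z) with
  f'(z) = -(z - umax/2)/(umax/2). Hence q decreases strictly between u* and umax/2
  and increases strictly beyond max u* (umax/2) = \<gamma>. The point m is the midpoint of u* and umax/2,
  so on C_b the function q first decreases down to its minimum at \<gamma> and then increases.
  Feasible points therefore exist iff q \<gamma> \<le> -C, and the least one is m if q m \<le> -C and otherwise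
  the first crossing of the level -C on (m, \<gamma>]; as C_b consists of nonnegative reals, minimising z^2
  means minimising z.\<close>

lemma gfun_has_real_derivative:
  assumes "umax \<noteq> 0"
    and F_prim: "\<And>u. (F has_real_derivative flux umax u) (at u)"
  shows "(gfun umax F ustar s has_real_derivative
           (1 / (umax / 2)) * (z - ustar) * (z - umax / 2)) (at z)"
proof -
  have "((\<lambda>z. (s - ustar) * flux umax s - (z - ustar) * (z * (1 - z / umax)) - F s + F z)
        has_real_derivative (1 / (umax / 2)) * (z - ustar) * (z - umax / 2)) (at z)"
    using assms by (auto intro!: derivative_eq_intros F_prim simp: flux_def field_simps)
  moreover have "gfun umax F ustar s = (\<lambda>z. (s - ustar) * flux umax s
                   - (z - ustar) * (z * (1 - z / umax)) - F s + F z)"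
    unfolding gfun_def flux_def by (rule ext) simp
  ultimately show ?thesis by simp
qed

lemma continuous_on_gfun:
  assumes "umax \<noteq> 0"
    and F_prim: "\<And>u. (F has_real_derivative flux umax u) (at u)"
  shows "continuous_on S (gfun umax F ustar s)"
  using DERIV_isCont[OF gfun_has_real_derivative[OF assms]]
  by (simp add: continuous_at_imp_continuous_on)

lemma gfun_strict_antimono_between:
  assumes "umax > 0"
    and F_prim: "\<And>u. (F has_real_derivative flux umax u) (at u)"
    and "min ustar (umax / 2) \<le> x" "x < y" "y \<le> max ustar (umax / 2)"
  shows "gfun umax F ustar s y < gfun umax F ustar s x"
proof (rule DERIV_neg_imp_decreasing_open[OF \<open>x < y\<close>])
  fix t assume "x < t" "t < y"
  hence "(t - ustar) * (t - umax / 2) < 0"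
    using assms(3,5) by (cases "ustar < umax / 2") (auto simp: mult_pos_neg mult_neg_pos)
  moreover have "0 < 1 / (umax / 2)" using \<open>umax > 0\<close> by simp
  ultimately have "(1 / (umax / 2)) * ((t - ustar) * (t - umax / 2)) < 0"
    by (rule mult_pos_neg[rotated])
  hence "(1 / (umax / 2)) * (t - ustar) * (t - umax / 2) < 0"
    by (simp only: mult.assoc)
  thus "\<exists>d. (gfun umax F ustar s has_real_derivative d) (at t) \<and> d < 0"
    using gfun_has_real_derivative[OF _ F_prim, of ustar s t] \<open>umax > 0\<close> by auto
next
  show "continuous_on {x..y} (gfun umax F ustar s)"
    using continuous_on_gfun[OF _ F_prim] \<open>umax > 0\<close> by simp
qed

lemma gfun_strict_mono_above:
  assumes "umax > 0"
    and F_prim: "\<And>u. (F has_real_derivative flux umax u) (at u)"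
    and "max ustar (umax / 2) \<le> x" "x < y"
  shows "gfun umax F ustar s x < gfun umax F ustar s y"
proof (rule DERIV_pos_imp_increasing_open[OF \<open>x < y\<close>])
  fix t assume "x < t" "t < y"
  hence "(1 / (umax / 2)) * (t - ustar) * (t - umax / 2) > 0"
    using assms(3) \<open>umax > 0\<close> by (intro mult_pos_pos) simp_all
  thus "\<exists>d. (gfun umax F ustar s has_real_derivative d) (at t) \<and> d > 0"
    using gfun_has_real_derivative[OF _ F_prim, of ustar s t] \<open>umax > 0\<close> by auto
next
  show "continuous_on {x..y} (gfun umax F ustar s)"
    using continuous_on_gfun[OF _ F_prim] \<open>umax > 0\<close> by simp
qed

lemma gfun_min_at_max:
  assumes "umax > 0"
    and F_prim: "\<And>u. (F has_real_derivative flux umax u) (at u)"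
    and "min ustar (umax / 2) \<le> z"
  shows "gfun umax F ustar s (max ustar (umax / 2)) \<le> gfun umax F ustar s z"
proof (cases z "max ustar (umax / 2)" rule: linorder_cases)
  case less
  show ?thesis using gfun_strict_antimono_between[OF assms(1,2,3) less] by (simp add: less_imp_le)
next
  case greater
  show ?thesis using gfun_strict_mono_above[OF assms(1,2) order.refl greater] by (simp add: less_imp_le)
qed simp

lemma first_crossing_of_strict_antimono:
  fixes q :: "real \<Rightarrow> real"
  assumes "a \<le> c" and cont: "continuous_on {a..c} q"
    and antimono: "\<And>x y. a \<le> x \<Longrightarrow> x < y \<Longrightarrow> y \<le> c \<Longrightarrow> q y < q x"
    and "q c \<le> t" "t < q a"
  shows "\<exists>r \<in> {a<..c}. q r = t \<and> (\<forall>z. a \<le> z \<longrightarrow> q z \<le> t \<longrightarrow> r \<le> z)"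
proof -
  obtain r where r: "a \<le> r" "r \<le> c" "q r = t"
    using IVT2'[OF \<open>q c \<le> t\<close> assms(5)[THEN less_imp_le] \<open>a \<le> c\<close> cont] by auto
  moreover have "r \<noteq> a" using r \<open>t < q a\<close> by auto
  moreover have "r \<le> z" if "a \<le> z" "q z \<le> t" for z
    using antimono[OF \<open>a \<le> z\<close> _ \<open>r \<le> c\<close>] r that(2) by force
  ultimately show ?thesis by auto
qed

lemma gfun_first_crossing:
  assumes "umax > 0"
    and F_prim: "\<And>u. (F has_real_derivative flux umax u) (at u)"
    and "min ustar (umax / 2) \<le> a" "a \<le> max ustar (umax / 2)"
    and "gfun umax F ustar s (max ustar (umax / 2)) \<le> t" "t < gfun umax F ustar s a"
  shows "\<exists>r \<in> {a<..max ustar (umax / 2)}. gfun umax F ustar s r = t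
           \<and> (\<forall>z. a \<le> z \<longrightarrow> gfun umax F ustar s z \<le> t \<longrightarrow> r \<le> z)"
proof (rule first_crossing_of_strict_antimono[OF assms(4) _ _ assms(5,6)])
  show "continuous_on {a..max ustar (umax / 2)} (gfun umax F ustar s)"
    using continuous_on_gfun[OF _ F_prim] \<open>umax > 0\<close> by simp
  show "gfun umax F ustar s y < gfun umax F ustar s x"
    if "a \<le> x" "x < y" "y \<le> max ustar (umax / 2)" for x y
    using that assms(3) by (intro gfun_strict_antimono_between[OF \<open>umax > 0\<close> F_prim]) auto
qed

lemma unique_square_minimizer_of_least:
  fixes S :: "real set"
  assumes "z0 \<in> S" "0 \<le> z0" "\<forall>y \<in> S. z0 \<le> y"
  shows "{z \<in> S. \<forall>y \<in> S. z^2 \<le> y^2} = {z0}"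
proof -
  have "z = z0" if "z \<in> S" "\<forall>y \<in> S. z^2 \<le> y^2" for z
  proof (rule antisym)
    have "z^2 \<le> z0^2" using that(2) assms(1) by blast
    then show "z \<le> z0" using assms(2) by (rule power2_le_imp_le)
    show "z0 \<le> z" using that(1) assms(3) by blast
  qed
  moreover have "z0^2 \<le> y^2" if "y \<in> S" for y
    using power_mono[OF _ assms(2)] that assms(3) by blast
  ultimately show ?thesis using assms(1) by blast
qed

lemma P2_optimal_eq_least:
  assumes "z0 \<in> P2_feasible umax F ustar ua C" "0 \<le> z0"
    and "\<forall>y \<in> P2_feasible umax F ustar ua C. z0 \<le> y"
  shows "{z. P2_optimal umax F ustar ua C z} = {z0}"
  unfolding P2_optimal_def by (rule unique_square_minimizer_of_least[OF assms])

theorem mainTheorem5: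
  fixes umax ustar ua C :: real and F :: "real \<Rightarrow> real"
  assumes umax_pos: "umax > 0"
    and ustar: "ustar \<in> {0..umax}"
    and ua: "ua \<in> {0..umax}"
    and C: "C \<ge> 0"
    and F_prim: "\<And>u. (F has_real_derivative flux umax u) (at u)"
  defines "q \<equiv> (\<lambda>z. gfun umax F ustar ua z)"
    and "uhat \<equiv> umax / 2"
    and "m \<equiv> (2 * ustar + umax) / 4"
    and "\<gamma> \<equiv> max ustar (umax / 2)"
  shows
    "(\<forall>z. (q has_real_derivative (1 / uhat) * (z - ustar) * (z - uhat)) (at z))
     \<and> (ustar \<noteq> uhat \<longrightarrow>
          (- C \<ge> q m \<longrightarrow> {z. P2_optimal umax F ustar ua C z} = {m})
        \<and> (q \<gamma> \<le> - C \<and> - C < q m \<longrightarrow>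
             (\<exists>r. r \<in> {m<..umax} \<and> q r = - C
                  \<and> (\<forall>z \<in> {m<..umax}. q z = - C \<longrightarrow> r \<le> z)
                  \<and> {z. P2_optimal umax F ustar ua C z} = {r}))
        \<and> (- C < q \<gamma> \<longrightarrow> P2_feasible umax F ustar ua C = {}))
     \<and> (ustar = uhat \<longrightarrow>
          (- C \<ge> q m \<longrightarrow> {z. P2_optimal umax F ustar ua C z} = {m})
        \<and> (- C < q m \<longrightarrow> P2_feasible umax F ustar ua C = {}))"
proof -
  have feasible_iff: "z \<in> P2_feasible umax F ustar ua C \<longleftrightarrow> m \<le> z \<and> z \<le> umax \<and> q z \<le> - C" for z
    unfolding P2_feasible_def Cb_def q_def m_def by auto
  have m_between: "min ustar (umax / 2) \<le> m" "m \<le> \<gamma>" "\<gamma> \<le> umax" "0 \<le> m"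
    using ustar umax_pos unfolding m_def \<gamma>_def by auto
  have q_min: "q \<gamma> \<le> q z" if "m \<le> z" for z
    unfolding q_def \<gamma>_def using gfun_min_at_max[OF umax_pos F_prim] m_between that by auto
  have optimal_m: "{z. P2_optimal umax F ustar ua C z} = {m}" if "- C \<ge> q m"
    using that m_between by (intro P2_optimal_eq_least) (auto simp: feasible_iff)
  have infeasible: "P2_feasible umax F ustar ua C = {}" if "- C < q \<gamma>"
    using that q_min by (force simp: feasible_iff)
  have first_crossing: "\<exists>r. r \<in> {m<..umax} \<and> q r = - C
                  \<and> (\<forall>z \<in> {m<..umax}. q z = - C \<longrightarrow> r \<le> z)
                  \<and> {z. P2_optimal umax F ustar ua C z} = {r}" if level: "q \<gamma> \<le> - C" "- C < q m"
  proof -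
    obtain r where r: "r \<in> {m<..\<gamma>}" "q r = - C"
      and least: "\<And>z. m \<le> z \<Longrightarrow> q z \<le> - C \<Longrightarrow> r \<le> z"
      using gfun_first_crossing[OF umax_pos F_prim] m_between level
      unfolding q_def \<gamma>_def by blast
    have "{z. P2_optimal umax F ustar ua C z} = {r}"
      using r m_between least by (intro P2_optimal_eq_least) (auto simp: feasible_iff)
    with r m_between least show ?thesis by (intro exI[of _ r]) auto
  qed
  have deriv: "(q has_real_derivative (1 / uhat) * (z - ustar) * (z - uhat)) (at z)" for z
    unfolding q_def uhat_def using umax_pos by (intro gfun_has_real_derivative F_prim) simp
  have "m = \<gamma>" if "ustar = uhat" using that unfolding m_def \<gamma>_def uhat_def by simp
  then show ?thesis
    using deriv optimal_m infeasible first_crossing by (intro conjI impI allI) simp_all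
qed

end
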